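(* Let $R=\{r_{ab}\}_{N\times N}$ be the transition rate matrix of an irreducible continuous-time Markov jump process on states $\{1,\dots,N\}$: for $a\neq b$, $r_{ab}\ge 0$ is the rate of jumps from $b$ to $a$, and $r_{bb}=-\sum_{a\neq b} r_{ab}$. Let $\boldsymbol{\pi}$ be the unique stationary distribution and $Z=\int_0^\infty\left(e^{Rt}-\boldsymbol{\pi}\boldsymbol{1}^\top\right)\mathrm{d}t$ the fundamental matrix. Fix distinct states $i\neq j$. Regard $R$ (hence $Z$) as a function of the single off-diagonal rate $r_{ij}>0$, with all other off-diagonal rates fixed and $r_{jj}=-\sum_{a\neq j}r_{aj}$ adjusted accordingly. For $m=1,2$, let $a^{(m)}_l$ ($l=1,\dots,N$) and $b^{(m)}_{kl}$ ($k\neq l$, $(k,l)\neq(i,j)$) be real coefficients not depending on $r_{ij}$ (they define the observables $Q_m=\sum_l a^{(m)}_l\tau_l(\tau)+\sum_{k\neq l,(k,l)\neq(i,j)} b^{(m)}_{kl}n_{kl}(\tau)$, which do not count transitions $j\to i$), and set $$c^{(m)}_l=a^{(m)}_l+\sum_{k\neq l,\ (k,l)\neq(i,j)} b^{(m)}_{kl}\,r_{kl}.$$ Define $$\chi_{ij}^{(1)(2)}=\frac{\sum_l c^{(1)}_l (Z_{li}-Z_{lj})}{\sum_l c^{(2)}_l (Z_{li}-Z_{lj})}.$$ Then, at every value of $r_{ij}$ where the denominator is nonzero, $\frac{\mathrm{d}\chi_{ij}^{(1)(2)}}{\mathrm{d}r_{ij}}=0$.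
   Context: $\tau_l(\tau)$ denotes the total time spent in state $l$ up to time $\tau$ and $n_{kl}(\tau)$ the number of jumps from $l$ to $k$ up to time $\tau$. Note that $c^{(m)}_l$ does not depend on $r_{ij}$. $\chi_{ij}^{(1)(2)}$ equals the long-time limit of the ratio of the responses $\frac{\mathrm{d}\langle Q_1(\tau)\rangle}{\mathrm{d}r_{ij}}/\frac{\mathrm{d}\langle Q_2(\tau)\rangle}{\mathrm{d}r_{ij}}$. $\boldsymbol{1}$ is the all-ones column vector. *)

theory Defs
  imports "HOL-Analysis.Analysis"
begin

text \<open>States are the elements of a finite type 'n (playing the role of {1..N}).
  Convention: for a \<noteq> b, the entry R $ a $ b = r_ab is the rate of jumps from b to a;
  diagonal entries make columns sum to zero.\<close>

definition rate_matrix :: "('n::finite \<Rightarrow> 'n \<Rightarrow> real) \<Rightarrow> 'n \<Rightarrow> 'n \<Rightarrow> real \<Rightarrow> real^'n^'n" where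
  "rate_matrix r i j x =
     (\<chi> a b. if a \<noteq> b then (if a = i \<and> b = j then x else r a b)
             else - (\<Sum>c\<in>UNIV - {b}. if c = i \<and> b = j then x else r c b))"

definition irreducible_rates :: "real^'n^'n \<Rightarrow> bool" where
  "irreducible_rates R \<longleftrightarrow>
     (\<forall>a b. (a, b) \<in> {(s, t). s \<noteq> t \<and> R $ t $ s > 0}\<^sup>*)"

fun matpow :: "real^'n^'n \<Rightarrow> nat \<Rightarrow> real^'n^'n" where
  "matpow A 0 = mat 1"
| "matpow A (Suc k) = A ** matpow A k"

definition mexp :: "real \<Rightarrow> real^'n^'n \<Rightarrow> real^'n^'n" where
  "mexp t A = (\<Sum>k. ((t ^ k) / fact k) *\<^sub>R matpow A k)"

definition is_stationary :: "real^'n^'n \<Rightarrow> real^'n \<Rightarrow> bool" where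
  "is_stationary R p \<longleftrightarrow> R *v p = 0 \<and> (\<forall>a. p $ a \<ge> 0) \<and> (\<Sum>a\<in>UNIV. p $ a) = 1"

definition stat_dist :: "real^'n^'n \<Rightarrow> real^'n" where
  "stat_dist R = (THE p. is_stationary R p)"

definition fundamental_matrix :: "real^'n^'n \<Rightarrow> real^'n^'n" where
  "fundamental_matrix R =
     (\<chi> a b. integral {0..} (\<lambda>t. mexp t R $ a $ b - stat_dist R $ a))"

definition coeff_c :: "('n::finite \<Rightarrow> 'n \<Rightarrow> real) \<Rightarrow> 'n \<Rightarrow> 'n \<Rightarrow> ('n \<Rightarrow> real) \<Rightarrow> ('n \<Rightarrow> 'n \<Rightarrow> real) \<Rightarrow> 'n \<Rightarrow> real" where
  "coeff_c r i j a b l = a l + (\<Sum>k\<in>{k. k \<noteq> l \<and> (k, l) \<noteq> (i, j)}. b k l * r k l)"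

definition chi_ratio ::
  "('n::finite \<Rightarrow> 'n \<Rightarrow> real) \<Rightarrow> 'n \<Rightarrow> 'n \<Rightarrow> ('n \<Rightarrow> real) \<Rightarrow> ('n \<Rightarrow> 'n \<Rightarrow> real)
     \<Rightarrow> ('n \<Rightarrow> real) \<Rightarrow> ('n \<Rightarrow> 'n \<Rightarrow> real) \<Rightarrow> real \<Rightarrow> real" where
  "chi_ratio r i j a1 b1 a2 b2 x =
     (let Z = fundamental_matrix (rate_matrix r i j x) in
      (\<Sum>l\<in>UNIV. coeff_c r i j a1 b1 l * (Z $ l $ i - Z $ l $ j)) /
      (\<Sum>l\<in>UNIV. coeff_c r i j a2 b2 l * (Z $ l $ i - Z $ l $ j)))"

end

theory Submission
  imports Defs "HOL-Real_Asymp.Real_Asymp"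
begin

text \<open>Write \<open>u = e\<^sub>i - e\<^sub>j\<close>. From \<open>R Z = \<pi> 1\<^sup>T - I\<close> and \<open>1\<^sup>T Z = 0\<close>, the vector \<open>Z u\<close> solves
  \<open>R d = -u\<close>, \<open>1\<^sup>T d = 0\<close>, and this solution is unique because irreducibility makes the kernel
  of \<open>R\<close> one-dimensional. Changing \<open>r\<^sub>i\<^sub>j\<close> from \<open>x\<close> to \<open>y\<close> adds the rank-one matrix
  \<open>(y - x) u e\<^sub>j\<^sup>T\<close> to \<open>R\<close>, so \<open>R\<^sub>y (Z\<^sub>x u) = -(1 - (y - x) (Z\<^sub>x u)\<^sub>j) u\<close> and hence
  \<open>Z\<^sub>x u = \<kappa> Z\<^sub>y u\<close> with \<open>\<kappa> \<noteq> 0\<close>. Numerator and denominator of \<open>\<chi>\<close> are linear in \<open>Z u\<close>, so \<open>\<chi>\<close>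
  does not depend on \<open>r\<^sub>i\<^sub>j\<close> at all. The properties of \<open>Z\<close> rest on the exponential convergence
  \<open>e\<^sup>t\<^sup>R \<rightarrow> \<pi> 1\<^sup>T\<close>, which comes from the \<open>l\<^sub>1\<close>-contraction of sum-zero vectors by the
  entrywise positive stochastic matrix \<open>e\<^sup>R\<close>.\<close>

lemma bounded_linear_vec_lambda:
  fixes f :: "'a::real_normed_vector \<Rightarrow> 'n::finite \<Rightarrow> 'b::real_normed_vector"
  assumes "\<And>i. bounded_linear (\<lambda>x. f x i)"
  shows "bounded_linear (\<lambda>x. \<chi> i. f x i)"
proof -
  obtain K where K: "\<And>i x. norm (f x i) \<le> norm x * K i"
    using bounded_linear.bounded[OF assms] by metis
  show ?thesis
  proof (rule bounded_linear_intro[where K="\<Sum>i\<in>UNIV. K i"])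
    show "(\<chi> i. f (x + y) i) = (\<chi> i. f x i) + (\<chi> i. f y i)" for x y
      by (simp add: vec_eq_iff linear_add[OF bounded_linear.linear[OF assms]])
    show "(\<chi> i. f (c *\<^sub>R x) i) = c *\<^sub>R (\<chi> i. f x i)" for c x
      by (simp add: vec_eq_iff linear_scale[OF bounded_linear.linear[OF assms]])
    show "norm (\<chi> i. f x i) \<le> norm x * (\<Sum>i\<in>UNIV. K i)" for x
    proof -
      have "norm (\<chi> i. f x i) \<le> (\<Sum>i\<in>UNIV. norm (f x i))"
        unfolding norm_vec_def by (simp add: L2_set_le_sum)
      also have "\<dots> \<le> norm x * (\<Sum>i\<in>UNIV. K i)"
        by (simp add: sum_distrib_left sum_mono K)
      finally show ?thesis .
    qed
  qed
qed

lemma matrix_vector_mult_axis_nth [simp]: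
  fixes A :: "real^'n::finite^'m"
  shows "(A *v axis b 1) $ a = A $ a $ b"
  by (simp add: matrix_vector_mult_basis column_def)

lemma matpow_Suc_right: "matpow A (Suc k) = matpow A k ** A"
  by (induction k) (simp_all add: matrix_mul_assoc)

lemma matpow_nonneg:
  assumes "\<And>a b. 0 \<le> (B::real^'n::finite^'n) $ a $ b"
  shows "0 \<le> matpow B k $ a $ b"
  using assms
  by (induction k arbitrary: a b) (auto simp: mat_def matrix_matrix_mult_def intro!: sum_nonneg)

lemma matpow_pos_of_path:
  fixes M :: "real^'n::finite^'n"
  assumes nonneg: "\<And>a b. 0 \<le> M $ a $ b"
    and "(a, b) \<in> {(s, t). s \<noteq> t \<and> M $ t $ s > 0}\<^sup>*"
  shows "\<exists>k. 0 < matpow M k $ b $ a"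
  using assms(2)
proof (induction rule: rtrancl_induct)
  case base
  have "0 < matpow M 0 $ a $ a" by (simp add: mat_def)
  then show ?case ..
next
  case (step y z)
  then obtain k where "0 < matpow M k $ y $ a" by blast
  with step.hyps(2) have "0 < M $ z $ y * matpow M k $ y $ a" by simp
  also have "\<dots> \<le> (\<Sum>d\<in>UNIV. M $ z $ d * matpow M k $ d $ a)"
    by (rule member_le_sum) (auto intro!: mult_nonneg_nonneg nonneg matpow_nonneg)
  also have "\<dots> = matpow M (Suc k) $ z $ a" by (simp add: matrix_matrix_mult_def)
  finally show ?case ..
qed

section \<open>The matrix exponential\<close>

text \<open>Square matrices, viewed as bounded operators, form a Banach algebra; this makes the
  library's \<open>exp\<close> and its derivative available for them.\<close>

typedef (overloaded) 'n endo = "UNIV :: ((real^'n::finite) \<Rightarrow>\<^sub>L (real^'n)) set"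
  morphisms blinfun_of_endo Endo ..

setup_lifting type_definition_endo

instantiation endo :: (finite) real_normed_vector
begin
lift_definition norm_endo :: "'a endo \<Rightarrow> real" is norm .
lift_definition minus_endo :: "'a endo \<Rightarrow> 'a endo \<Rightarrow> 'a endo" is "(-)" .
lift_definition plus_endo :: "'a endo \<Rightarrow> 'a endo \<Rightarrow> 'a endo" is "(+)" .
lift_definition uminus_endo :: "'a endo \<Rightarrow> 'a endo" is uminus .
lift_definition zero_endo :: "'a endo" is 0 .
lift_definition scaleR_endo :: "real \<Rightarrow> 'a endo \<Rightarrow> 'a endo" is scaleR .
definition dist_endo :: "'a endo \<Rightarrow> 'a endo \<Rightarrow> real" where "dist_endo F G = norm (F - G)"
definition sgn_endo :: "'a endo \<Rightarrow> 'a endo" where "sgn_endo F = inverse (norm F) *\<^sub>R F"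
definition uniformity_endo :: "('a endo \<times> 'a endo) filter"
  where "uniformity_endo = (INF e\<in>{0<..}. principal {(F, G). dist F G < e})"
definition open_endo :: "'a endo set \<Rightarrow> bool"
  where "open_endo S = (\<forall>F\<in>S. \<forall>\<^sub>F (F', G) in uniformity. F' = F \<longrightarrow> G \<in> S)"
instance
  by standard
    (unfold dist_endo_def open_endo_def sgn_endo_def uniformity_endo_def,
     (rule refl | transfer; force simp: norm_triangle_ineq algebra_simps)+)
end

lemma dist_blinfun_of_endo: "dist (blinfun_of_endo F) (blinfun_of_endo G) = dist F G"
  unfolding dist_endo_def dist_norm by transfer simp

instance endo :: (finite) banach
proof
  fix X :: "nat \<Rightarrow> 'a endo"
  assume "Cauchy X"
  then have "Cauchy (\<lambda>n. blinfun_of_endo (X n))"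
    unfolding Cauchy_def dist_blinfun_of_endo .
  then obtain L where "(\<lambda>n. blinfun_of_endo (X n)) \<longlonglongrightarrow> L"
    using convergent_eq_Cauchy by blast
  then have "X \<longlonglongrightarrow> Endo L"
    unfolding lim_sequentially by (metis Endo_inverse UNIV_I dist_blinfun_of_endo)
  then show "convergent X" by (auto simp: convergent_def)
qed

instantiation endo :: (finite) real_normed_algebra_1
begin
lift_definition times_endo :: "'a endo \<Rightarrow> 'a endo \<Rightarrow> 'a endo" is "(o\<^sub>L)" .
lift_definition one_endo :: "'a endo" is id_blinfun .
instance
proof
  show "(0::'a endo) \<noteq> 1"
  proof transfer
    have "id_blinfun (axis undefined 1 :: real^'a) \<noteq> 0" by (simp add: axis_eq_0_iff)
    then show "(0::(real^'a) \<Rightarrow>\<^sub>L _) \<noteq> id_blinfun" by (metis blinfun.zero_left)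
  qed
qed (transfer; auto intro!: blinfun_eqI simp: blinfun.bilinear_simps norm_blinfun_compose)+
end

definition matrix_of_endo :: "'n::finite endo \<Rightarrow> real^'n^'n" where
  "matrix_of_endo F = matrix (blinfun_apply (blinfun_of_endo F))"

definition endo_of_matrix :: "real^'n^'n \<Rightarrow> 'n::finite endo" where
  "endo_of_matrix A = Endo (Blinfun ((*v) A))"

lemma matrix_of_endo_of_matrix [simp]: "matrix_of_endo (endo_of_matrix A) = A"
  by (simp add: matrix_of_endo_def endo_of_matrix_def Endo_inverse bounded_linear_Blinfun_apply)

lemma matrix_of_endo_one [simp]: "matrix_of_endo 1 = mat 1"
  unfolding matrix_of_endo_def by transfer (simp add: matrix_id_mat_1 flip: id_def)

lemma matrix_of_endo_mult: "matrix_of_endo (F * G) = matrix_of_endo F ** matrix_of_endo G"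
proof -
  have "blinfun_apply (blinfun_of_endo (F * G)) = blinfun_apply (blinfun_of_endo F) \<circ> blinfun_apply (blinfun_of_endo G)"
    by (auto simp: times_endo.rep_eq)
  then show ?thesis
    unfolding matrix_of_endo_def
    by (simp add: matrix_compose bounded_linear.linear[OF blinfun.bounded_linear_right])
qed

lemma matrix_of_endo_power: "matrix_of_endo (F ^ k) = matpow (matrix_of_endo F) k"
  by (induction k) (simp_all add: matrix_of_endo_mult)

lemma bounded_linear_matrix_of_endo: "bounded_linear matrix_of_endo"
proof -
  have "bounded_linear (blinfun_of_endo :: 'n::finite endo \<Rightarrow> _)"
    by (rule bounded_linear_intro[where K=1]; transfer; simp)
  then have "bounded_linear (\<lambda>F. blinfun_apply (blinfun_of_endo F) (axis j 1) $ i)" for i j :: "'n::finite"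
    by (intro bounded_linear_compose[OF bounded_linear_vec_nth]
        bounded_linear_compose[OF blinfun.bounded_linear_left])
  then show ?thesis
    unfolding matrix_of_endo_def matrix_def by (intro bounded_linear_vec_lambda)
qed

lemma matpow_sums_matrix_of_exp:
  "(\<lambda>k. (t ^ k / fact k) *\<^sub>R matpow (matrix_of_endo X) k) sums matrix_of_endo (exp (t *\<^sub>R X))"
proof -
  have "matrix_of_endo ((t *\<^sub>R X) ^ k /\<^sub>R fact k) = (t ^ k / fact k) *\<^sub>R matpow (matrix_of_endo X) k"
    for k
    by (simp only: scaleR_power scaleR_scaleR divide_inverse_commute matrix_of_endo_power
        linear_scale[OF bounded_linear.linear[OF bounded_linear_matrix_of_endo]])
  then show ?thesis
    using bounded_linear.sums[OF bounded_linear_matrix_of_endo exp_converges[of "t *\<^sub>R X"]]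
    by simp
qed

lemma mexp_matrix_of_endo: "mexp t (matrix_of_endo X) = matrix_of_endo (exp (t *\<^sub>R X))"
  using matpow_sums_matrix_of_exp[of t X] by (simp add: mexp_def sums_iff)

lemma mexp_eq_matrix_of_exp: "mexp t A = matrix_of_endo (exp (t *\<^sub>R endo_of_matrix A))"
  using mexp_matrix_of_endo[of t "endo_of_matrix A"] by simp

lemma mexp_sums: "(\<lambda>k. (t ^ k / fact k) *\<^sub>R matpow A k) sums mexp t A"
  using matpow_sums_matrix_of_exp[of t "endo_of_matrix A"] by (simp add: mexp_eq_matrix_of_exp)

lemma mexp_zero [simp]: "mexp 0 A = mat 1"
  by (simp add: mexp_eq_matrix_of_exp)

lemma mexp_add: "mexp (s + t) A = mexp s A ** mexp t A"
  by (simp add: mexp_eq_matrix_of_exp scaleR_add_left exp_add_commuting matrix_of_endo_mult)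

lemma mexp_of_nat: "mexp (real n) A = matpow (mexp 1 A) n"
proof (induction n)
  case (Suc n)
  have "mexp (real (Suc n)) A = mexp (1 + real n) A" by simp
  then show ?case by (simp only: mexp_add Suc.IH matpow.simps)
qed simp

lemma mexp_shift: "mexp t (A + c *\<^sub>R mat 1) = exp (c * t) *\<^sub>R mexp t A"
proof -
  let ?X = "endo_of_matrix A"
  have linear: "linear matrix_of_endo" by (rule bounded_linear.linear[OF bounded_linear_matrix_of_endo])
  have "A + c *\<^sub>R mat 1 = matrix_of_endo (?X + of_real c)"
    by (simp add: linear_add[OF linear] linear_scale[OF linear] of_real_def)
  then have "mexp t (A + c *\<^sub>R mat 1) = matrix_of_endo (exp (t *\<^sub>R ?X + of_real (c * t)))"
    by (simp add: mexp_matrix_of_endo scaleR_add_right of_real_def mult.commute)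
  also have "\<dots> = matrix_of_endo (exp (t *\<^sub>R ?X) * of_real (exp (c * t)))"
  proof -
    have "t *\<^sub>R ?X * of_real (c * t) = of_real (c * t) * t *\<^sub>R ?X"
      by (simp add: of_real_def)
    then show ?thesis by (simp only: exp_add_commuting exp_of_real)
  qed
  also have "\<dots> = exp (c * t) *\<^sub>R mexp t A"
    by (simp add: mexp_eq_matrix_of_exp of_real_def linear_scale[OF linear])
  finally show ?thesis .
qed

lemma has_vector_derivative_mexp: "((\<lambda>t. mexp t A) has_vector_derivative A ** mexp t A) (at t)"
  using bounded_linear.has_vector_derivative[OF bounded_linear_matrix_of_endo
      exp_scaleR_has_vector_derivative_left[of "endo_of_matrix A" t]]
  by (simp add: mexp_eq_matrix_of_exp matrix_of_endo_mult)

lemma has_real_derivative_mexp_entry: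
  fixes A :: "real^'n::finite^'n"
  shows "((\<lambda>t. mexp t A $ a $ b) has_real_derivative (A ** mexp t A) $ a $ b) (at t)"
proof -
  have "bounded_linear (\<lambda>M :: real^'n^'n. M $ a $ b)"
    by (intro bounded_linear_compose[OF bounded_linear_vec_nth] bounded_linear_vec_nth)
  from bounded_linear.has_vector_derivative[OF this has_vector_derivative_mexp]
  show ?thesis by (simp add: has_real_derivative_iff_has_vector_derivative)
qed

lemma bounded_linear_mexp_eq_mat_1:
  assumes "bounded_linear \<phi>" and "\<And>k. \<phi> (matpow A (Suc k)) = 0"
  shows "\<phi> (mexp t A) = \<phi> (mat 1)"
proof -
  have terms: "\<phi> ((t ^ k / fact k) *\<^sub>R matpow A k) = (if k = 0 then \<phi> (mat 1) else 0)" for k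
    using assms(2)[of "k - 1"] by (cases k) (simp_all add: linear_scale[OF bounded_linear.linear[OF assms(1)]])
  have "(\<lambda>k. if k = 0 then \<phi> (mat 1) else 0) sums \<phi> (mexp t A)"
    using bounded_linear.sums[OF assms(1) mexp_sums[of t A]] by (simp only: terms)
  moreover have "(\<lambda>k. if k = 0 then \<phi> (mat 1) else 0) sums \<phi> (mat 1)"
    using sums_single[of 0 "\<lambda>_. \<phi> (mat 1)"] by simp
  ultimately show ?thesis by (rule sums_unique2)
qed

lemma mexp_fixes_kernel:
  fixes A :: "real^'n::finite^'n"
  assumes "A *v v = 0"
  shows "mexp t A *v v = v"
proof -
  have "bounded_linear (\<lambda>M :: real^'n^'n. M *v v)"
    by (simp add: linear_conv_bounded_linear[symmetric] linear_iff matrix_vector_mult_add_rdistrib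
        scaleR_matrix_vector_assoc)
  moreover have "matpow A (Suc k) *v v = 0" for k
    by (simp only: matpow_Suc_right flip: matrix_vector_mul_assoc) (simp add: assms)
  ultimately show ?thesis
    using bounded_linear_mexp_eq_mat_1[where \<phi> = "\<lambda>M. M *v v"] by simp
qed

lemma mexp_fixes_left_kernel:
  fixes A :: "real^'n::finite^'n"
  assumes "w v* A = 0"
  shows "w v* mexp t A = w"
proof -
  have "bounded_linear (\<lambda>M :: real^'n^'n. w v* M)"
    by (simp add: linear_conv_bounded_linear[symmetric] linear_iff vector_matrix_mult_add_rdistrib
        vector_scaleR_matrix_ac)
  then show ?thesis
    using bounded_linear_mexp_eq_mat_1[where \<phi> = "\<lambda>M. w v* M"]
    by (simp add: assms flip: vector_matrix_mul_assoc)
qed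

lemma mexp_ge_term:
  assumes "\<And>a b. 0 \<le> (B::real^'n::finite^'n) $ a $ b" and "0 \<le> t"
  shows "(t ^ k / fact k) * matpow B k $ a $ b \<le> mexp t B $ a $ b"
proof -
  let ?f = "\<lambda>k. (t ^ k / fact k) * matpow B k $ a $ b"
  have "?f sums mexp t B $ a $ b"
    using bounded_linear.sums[OF bounded_linear_compose[OF bounded_linear_vec_nth bounded_linear_vec_nth]
        mexp_sums]
    by simp
  moreover have "0 \<le> ?f k" for k
    using assms by (simp add: matpow_nonneg)
  ultimately show ?thesis
    using sum_le_suminf[of ?f "{k}"] by (simp add: sums_iff)
qed

section \<open>Contraction by stochastic matrices\<close>

definition l1_norm :: "real^'n::finite \<Rightarrow> real" where
  "l1_norm v = (\<Sum>a\<in>UNIV. \<bar>v $ a\<bar>)"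

definition vec_sum :: "real^'n::finite \<Rightarrow> real" where
  "vec_sum v = (\<Sum>a\<in>UNIV. v $ a)"

lemma l1_norm_nonneg: "0 \<le> l1_norm v"
  unfolding l1_norm_def by (simp add: sum_nonneg)

lemma abs_le_l1_norm: "\<bar>v $ a\<bar> \<le> l1_norm v"
  unfolding l1_norm_def by (rule member_le_sum) auto

lemma l1_norm_diff_le: "l1_norm (v - w) \<le> l1_norm v + l1_norm w"
  unfolding l1_norm_def by (simp add: sum.distrib[symmetric] sum_mono abs_triangle_ineq4)

lemma l1_norm_eq_0_iff: "l1_norm v = 0 \<longleftrightarrow> v = 0"
  unfolding l1_norm_def by (simp add: sum_nonneg_eq_0_iff vec_eq_iff)

lemma vec_sum_matrix_vector_mult:
  "vec_sum (A *v v) = (\<Sum>b\<in>UNIV. (\<Sum>a\<in>UNIV. A $ a $ b) * v $ b)"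
  unfolding vec_sum_def matrix_vector_mult_def
  by (simp add: sum_distrib_right) (rule sum.swap)

lemma vec_sum_stochastic:
  assumes "\<And>b. (\<Sum>a\<in>UNIV. P $ a $ b) = 1"
  shows "vec_sum (P *v v) = vec_sum v"
  using vec_sum_matrix_vector_mult[of P v] by (simp add: assms vec_sum_def)

lemma l1_norm_contraction:
  fixes P :: "real^'n::finite^'n" and \<delta> :: real
  assumes lower: "\<And>a b. \<delta> \<le> P $ a $ b"
    and stochastic: "\<And>b. (\<Sum>a\<in>UNIV. P $ a $ b) = 1"
    and "vec_sum v = 0"
  shows "l1_norm (P *v v) \<le> (1 - CARD('n) * \<delta>) * l1_norm v"
proof -
  \<comment> \<open>Subtracting the constant \<open>\<delta>\<close> from each entry does not change \<open>P *v v\<close> because \<open>v\<close> sums to 0.\<close>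
  have "(P *v v) $ a = (\<Sum>b\<in>UNIV. (P $ a $ b - \<delta>) * v $ b)" for a
    using \<open>vec_sum v = 0\<close>
    by (simp add: matrix_vector_mult_def vec_sum_def left_diff_distrib sum_subtractf
        flip: sum_distrib_left)
  then have "\<bar>(P *v v) $ a\<bar> \<le> (\<Sum>b\<in>UNIV. (P $ a $ b - \<delta>) * \<bar>v $ b\<bar>)" for a
    using lower by (auto intro!: order_trans[OF sum_abs] sum_mono simp: abs_mult)
  then have "l1_norm (P *v v) \<le> (\<Sum>a\<in>UNIV. \<Sum>b\<in>UNIV. (P $ a $ b - \<delta>) * \<bar>v $ b\<bar>)"
    unfolding l1_norm_def by (rule sum_mono)
  also have "\<dots> = (\<Sum>b\<in>UNIV. (\<Sum>a\<in>UNIV. P $ a $ b - \<delta>) * \<bar>v $ b\<bar>)"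
    by (subst sum.swap) (simp add: sum_distrib_right)
  also have "\<dots> = (1 - CARD('n) * \<delta>) * l1_norm v"
    by (simp add: stochastic sum_subtractf l1_norm_def sum_distrib_left)
  finally show ?thesis .
qed

lemma l1_norm_contraction_matpow:
  fixes P :: "real^'n::finite^'n" and \<delta> :: real
  assumes lower: "\<And>a b. \<delta> \<le> P $ a $ b"
    and stochastic: "\<And>b. (\<Sum>a\<in>UNIV. P $ a $ b) = 1"
    and "vec_sum v = 0"
  shows "l1_norm (matpow P n *v v) \<le> (1 - CARD('n) * \<delta>) ^ n * l1_norm v"
proof (induction n)
  case (Suc n)
  have sum_zero: "vec_sum (matpow P n *v v) = 0"
    by (induction n)
      (simp_all add: \<open>vec_sum v = 0\<close> vec_sum_stochastic[OF stochastic] flip: matrix_vector_mul_assoc)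
  have "CARD('n) * \<delta> \<le> 1"
    using sum_mono[of UNIV "\<lambda>_. \<delta>" "\<lambda>a. P $ a $ undefined"] by (simp add: lower stochastic)
  have "l1_norm (matpow P (Suc n) *v v) = l1_norm (P *v (matpow P n *v v))"
    by (simp add: matrix_vector_mul_assoc)
  also have "\<dots> \<le> (1 - CARD('n) * \<delta>) * l1_norm (matpow P n *v v)"
    by (rule l1_norm_contraction[OF lower stochastic sum_zero])
  also have "\<dots> \<le> (1 - CARD('n) * \<delta>) * ((1 - CARD('n) * \<delta>) ^ n * l1_norm v)"
    using \<open>CARD('n) * \<delta> \<le> 1\<close> by (intro mult_left_mono Suc.IH) simp
  finally show ?case by simp
qed simp

lemma fundamental_theorem_of_calculus_atLeast:
  fixes f g h :: "real \<Rightarrow> real"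
  assumes "f integrable_on {0..}" and "g integrable_on {0..}"
    and "\<And>t. 0 \<le> t \<Longrightarrow> \<bar>f t\<bar> \<le> g t"
    and "\<And>t. (h has_real_derivative f t) (at t)"
    and "(h \<longlongrightarrow> L) at_top"
  shows "integral {0..} f = L - h 0"
proof -
  define f' where "f' = (\<lambda>k::nat. \<lambda>t. if t \<in> {0..real k} then f t else 0)"
  have "(f has_integral (h (real k) - h 0)) {0..real k}" for k
    using assms(4)
    by (intro fundamental_theorem_of_calculus)
      (auto intro: has_field_derivative_at_within simp flip: has_real_derivative_iff_has_vector_derivative)
  then have truncated: "(f' k has_integral (h (real k) - h 0)) {0..}" for k
    unfolding f'_def by (subst has_integral_restrict) auto
  have "integral {0..} (f' k) = h (real k) - h 0" for k
    using truncated[of k] by (rule integral_unique)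
  moreover have "(\<lambda>k. integral {0..} (f' k)) \<longlonglongrightarrow> integral {0..} f"
  proof (rule dominated_convergence(2)[where h=g])
    show "f' k integrable_on {0..}" for k using truncated by blast
    show "norm (f' k t) \<le> g t" if "t \<in> {0..}" for k t
      using assms(3)[of t] that by (auto simp: f'_def)
    show "(\<lambda>k. f' k t) \<longlonglongrightarrow> f t" if "t \<in> {0..}" for t
    proof (rule tendsto_eventually)
      show "\<forall>\<^sub>F k in sequentially. f' k t = f t"
        using eventually_ge_at_top[of "nat \<lceil>t\<rceil>"]
        by eventually_elim (use that in \<open>auto simp: f'_def nat_ceiling_le_eq\<close>)
    qed
  qed (use assms(2) in auto)
  ultimately have "(\<lambda>k. h (real k) - h 0) \<longlonglongrightarrow> integral {0..} f"
    by simp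
  moreover have "(\<lambda>k. h (real k) - h 0) \<longlonglongrightarrow> L - h 0"
    by (intro tendsto_diff tendsto_const filterlim_compose[OF assms(5) filterlim_real_sequentially])
  ultimately show ?thesis
    by (rule LIMSEQ_unique)
qed

section \<open>Irreducible rate matrices\<close>

locale rate_generator =
  fixes R :: "real^'n::finite^'n"
  assumes rate_nonneg: "\<And>a b. a \<noteq> b \<Longrightarrow> 0 \<le> R $ a $ b"
    and column_sum_zero: "\<And>b. (\<Sum>a\<in>UNIV. R $ a $ b) = 0"
    and irreducible: "irreducible_rates R"
begin

lemma vec_sum_rate_mult: "vec_sum (R *v v) = 0"
  by (simp add: vec_sum_matrix_vector_mult column_sum_zero)

lemma mexp_column_sum: "(\<Sum>a\<in>UNIV. mexp t R $ a $ b) = 1"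
proof -
  have "(\<chi> _. 1) v* R = 0"
    by (simp add: vector_matrix_mult_def vec_eq_iff column_sum_zero)
  then have "(\<chi> _. 1) v* mexp t R = (\<chi> _. 1)"
    by (rule mexp_fixes_left_kernel)
  then show ?thesis
    by (simp add: vector_matrix_mult_def vec_eq_iff)
qed

lemma uniformization:
  obtains M c where "\<And>a b. 0 \<le> M $ a $ b" and "\<And>a b. a \<noteq> b \<Longrightarrow> M $ a $ b = R $ a $ b"
    and "\<And>t. mexp t R = exp (- c * t) *\<^sub>R mexp t M"
proof -
  define c where "c = (\<Sum>b\<in>UNIV. \<bar>R $ b $ b\<bar>)"
  have "0 \<le> (R + c *\<^sub>R mat 1) $ a $ b" for a b
  proof (cases "a = b")
    case True
    have "\<bar>R $ b $ b\<bar> \<le> c" unfolding c_def by (rule member_le_sum) auto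
    then show ?thesis using True by (simp add: mat_def)
  qed (simp add: mat_def rate_nonneg)
  moreover have "mexp t R = exp (- c * t) *\<^sub>R mexp t (R + c *\<^sub>R mat 1)" for t
    by (simp add: mexp_shift exp_minus)
  ultimately show ?thesis
    by (intro that[of "R + c *\<^sub>R mat 1" c]) (simp_all add: mat_def)
qed

lemma mexp_nonneg:
  assumes "0 \<le> t"
  shows "0 \<le> mexp t R $ a $ b"
proof -
  obtain M c where M: "\<And>a b. 0 \<le> M $ a $ b"
    and "\<And>a b. a \<noteq> b \<Longrightarrow> M $ a $ b = R $ a $ b"
    and eq: "\<And>t. mexp t R = exp (- c * t) *\<^sub>R mexp t M"
    by (rule uniformization) blast
  have "0 \<le> (mat 1 :: real^'n^'n) $ a $ b" by (simp add: mat_def)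
  also have "\<dots> \<le> mexp t M $ a $ b"
    using mexp_ge_term[OF M assms, of 0] by simp
  finally show ?thesis by (simp add: eq)
qed

lemma mexp_pos:
  assumes "0 < t"
  shows "0 < mexp t R $ a $ b"
proof -
  obtain M c where M: "\<And>a b. 0 \<le> M $ a $ b" and offdiag: "\<And>a b. a \<noteq> b \<Longrightarrow> M $ a $ b = R $ a $ b"
    and eq: "\<And>t. mexp t R = exp (- c * t) *\<^sub>R mexp t M"
    by (rule uniformization) blast
  have "{(s, u). s \<noteq> u \<and> M $ u $ s > 0} = {(s, u). s \<noteq> u \<and> R $ u $ s > 0}"
    using offdiag by auto
  then obtain k where "0 < matpow M k $ a $ b"
    using matpow_pos_of_path[OF M, of b a] irreducible unfolding irreducible_rates_def by auto
  then have "0 < (t ^ k / fact k) * matpow M k $ a $ b" using assms by simp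
  also have "\<dots> \<le> mexp t M $ a $ b" using mexp_ge_term[OF M] assms by simp
  finally show ?thesis by (simp add: eq)
qed

lemma mexp_contraction:
  obtains \<rho> where "0 \<le> \<rho>" and "\<rho> < 1"
    and "\<And>v n. vec_sum v = 0 \<Longrightarrow> l1_norm (mexp (real n) R *v v) \<le> \<rho> ^ n * l1_norm v"
proof -
  define \<delta> where "\<delta> = Min ((\<lambda>(a, b). mexp 1 R $ a $ b) ` UNIV)"
  have lower: "\<delta> \<le> mexp 1 R $ a $ b" for a b
    unfolding \<delta>_def by (rule Min_le) (auto intro: image_eqI[where x="(a, b)"])
  have "0 < \<delta>"
    unfolding \<delta>_def by (subst Min_gr_iff) (auto simp: mexp_pos)
  moreover have "CARD('n) * \<delta> \<le> 1"
    using sum_mono[of UNIV "\<lambda>_. \<delta>" "\<lambda>a. mexp 1 R $ a $ undefined"] by (simp add: lower mexp_column_sum)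
  ultimately show ?thesis
    using l1_norm_contraction_matpow[OF lower mexp_column_sum]
    by (intro that[of "1 - CARD('n) * \<delta>"]) (simp_all add: mexp_of_nat)
qed

lemma rate_kernel_trivial:
  assumes "R *v w = 0" and "vec_sum w = 0"
  shows "w = 0"
proof -
  obtain \<rho> where "0 \<le> \<rho>" and "\<rho> < 1"
    and contraction: "\<And>v n. vec_sum v = 0 \<Longrightarrow> l1_norm (mexp (real n) R *v v) \<le> \<rho> ^ n * l1_norm v"
    by (rule mexp_contraction) blast
  have "l1_norm w \<le> \<rho> * l1_norm w"
    using contraction[OF assms(2), of 1] mexp_fixes_kernel[OF assms(1)] by simp
  then have "(1 - \<rho>) * l1_norm w \<le> 0"
    by (simp add: algebra_simps)
  then have "l1_norm w = 0"
    using \<open>\<rho> < 1\<close> l1_norm_nonneg[of w] by (simp add: mult_le_0_iff)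
  then show ?thesis by (simp add: l1_norm_eq_0_iff)
qed

lemma rate_kernel_nontrivial:
  obtains w where "R *v w = 0" and "w \<noteq> 0"
proof (rule ccontr)
  assume "\<not> thesis"
  then have "\<forall>w. R *v w = 0 \<longrightarrow> w = 0" using that by blast
  then obtain B where "B ** R = mat 1" using matrix_left_invertible_ker by blast
  then have "R ** B = mat 1" using matrix_left_right_inverse by blast
  then have "R *v (B *v axis k 1) = axis k 1" for k
    by (simp add: matrix_vector_mul_assoc)
  then have "vec_sum (axis k (1::real)) = 0" for k :: 'n
    using vec_sum_rate_mult[of "B *v axis k 1"] by simp
  moreover have "vec_sum (axis k (1::real)) = 1" for k :: 'n
    by (simp add: vec_sum_def axis_def)
  ultimately show False by simp
qed

lemma rate_kernel_nonneg:
  assumes "R *v p = 0" and "vec_sum p = 1"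
  shows "0 \<le> p $ a"
proof -
  obtain \<rho> where "0 \<le> \<rho>" "\<rho> < 1"
    and contraction: "\<And>v n. vec_sum v = 0 \<Longrightarrow> l1_norm (mexp (real n) R *v v) \<le> \<rho> ^ n * l1_norm v"
    by (rule mexp_contraction) blast
  define q :: "real^'n" where "q = axis a 1"
  have "vec_sum (p - q) = 0"
    using assms(2) by (simp add: q_def vec_sum_def sum_subtractf axis_def)
  \<comment> \<open>\<open>p = e\<^sup>n\<^sup>R q + e\<^sup>n\<^sup>R (p - q)\<close>, where the first term is nonnegative and the second one vanishes as \<open>n \<rightarrow> \<infinity>\<close>.\<close>
  have "- (\<rho> ^ n * l1_norm (p - q)) \<le> p $ a" for n
  proof -
    have "p $ a = (mexp (real n) R *v q) $ a + (mexp (real n) R *v (p - q)) $ a"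
      using mexp_fixes_kernel[OF assms(1)] by (simp add: matrix_vector_mult_diff_distrib)
    moreover have "0 \<le> (mexp (real n) R *v q) $ a"
      by (simp add: q_def mexp_nonneg)
    moreover have "\<bar>(mexp (real n) R *v (p - q)) $ a\<bar> \<le> \<rho> ^ n * l1_norm (p - q)"
      using abs_le_l1_norm contraction[OF \<open>vec_sum (p - q) = 0\<close>] by (rule order_trans)
    ultimately show ?thesis by linarith
  qed
  moreover have "(\<lambda>n. - (\<rho> ^ n * l1_norm (p - q))) \<longlonglongrightarrow> - (0 * l1_norm (p - q))"
    using \<open>0 \<le> \<rho>\<close> \<open>\<rho> < 1\<close> by (intro tendsto_intros LIMSEQ_power_zero) simp
  ultimately show ?thesis
    by (intro LIMSEQ_le_const2) auto
qed

lemma stationary_exists: "\<exists>p. is_stationary R p"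
proof -
  obtain w where "R *v w = 0" and "w \<noteq> 0" by (rule rate_kernel_nontrivial)
  then have "vec_sum w \<noteq> 0" using rate_kernel_trivial by blast
  define p where "p = (1 / vec_sum w) *\<^sub>R w"
  have "R *v p = 0" and "vec_sum p = 1"
    using \<open>R *v w = 0\<close> \<open>vec_sum w \<noteq> 0\<close>
    by (simp_all add: p_def matrix_vector_mult_scaleR vec_sum_def flip: sum_divide_distrib)
  then have "is_stationary R p"
    using rate_kernel_nonneg by (simp add: is_stationary_def vec_sum_def)
  then show ?thesis ..
qed

lemma stationary_unique:
  assumes "is_stationary R p" and "is_stationary R q"
  shows "p = q"
proof -
  have "R *v (p - q) = 0" and "vec_sum (p - q) = 0"
    using assms by (simp_all add: is_stationary_def matrix_vector_mult_diff_distrib vec_sum_def sum_subtractf)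
  then have "p - q = 0" by (rule rate_kernel_trivial)
  then show ?thesis by simp
qed

lemma is_stationary_stat_dist: "is_stationary R (stat_dist R)"
  unfolding stat_dist_def using stationary_exists stationary_unique by (metis theI)

lemma rate_mult_stat_dist: "R *v stat_dist R = 0"
  and stat_dist_nonneg: "0 \<le> stat_dist R $ a"
  and vec_sum_stat_dist: "vec_sum (stat_dist R) = 1"
  using is_stationary_stat_dist by (simp_all add: is_stationary_def vec_sum_def)

lemma mexp_decay:
  obtains \<rho> where "0 \<le> \<rho>" and "\<rho> < 1"
    and "\<And>t a b. 0 \<le> t \<Longrightarrow> \<bar>mexp t R $ a $ b - stat_dist R $ a\<bar> \<le> 2 * \<rho> ^ nat \<lfloor>t\<rfloor>"
proof -
  obtain \<rho> where "0 \<le> \<rho>" "\<rho> < 1"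
    and contraction: "\<And>v n. vec_sum v = 0 \<Longrightarrow> l1_norm (mexp (real n) R *v v) \<le> \<rho> ^ n * l1_norm v"
    by (rule mexp_contraction) blast
  have "\<bar>mexp t R $ a $ b - stat_dist R $ a\<bar> \<le> 2 * \<rho> ^ nat \<lfloor>t\<rfloor>" if "0 \<le> t" for t a b
  proof -
    define n where "n = nat \<lfloor>t\<rfloor>"
    define s where "s = t - real n"
    have "0 \<le> s" using that by (simp add: s_def n_def)
    define w where "w = mexp s R *v axis b 1 - stat_dist R"
    have "mexp t R = mexp (real n) R ** mexp s R"
      by (simp add: s_def flip: mexp_add)
    then have "mexp t R $ a $ b - stat_dist R $ a = (mexp (real n) R *v w) $ a"
      by (simp add: w_def matrix_vector_mult_diff_distrib matrix_vector_mul_assoc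
          mexp_fixes_kernel[OF rate_mult_stat_dist])
    also have "\<bar>\<dots>\<bar> \<le> \<rho> ^ n * l1_norm w"
    proof (rule order_trans[OF abs_le_l1_norm contraction])
      show "vec_sum w = 0"
        using mexp_column_sum[of s b] vec_sum_stat_dist by (simp add: w_def vec_sum_def sum_subtractf)
    qed
    also have "\<dots> \<le> \<rho> ^ n * 2"
    proof (rule mult_left_mono)
      have "l1_norm (mexp s R *v axis b 1) = 1"
        using mexp_column_sum[of s b] mexp_nonneg[OF \<open>0 \<le> s\<close>] by (simp add: l1_norm_def)
      moreover have "l1_norm (stat_dist R) = 1"
        using vec_sum_stat_dist stat_dist_nonneg by (simp add: l1_norm_def vec_sum_def)
      ultimately show "l1_norm w \<le> 2"
        using l1_norm_diff_le[of "mexp s R *v axis b 1" "stat_dist R"] by (simp add: w_def)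
    qed (use \<open>0 \<le> \<rho>\<close> in simp)
    finally show ?thesis by (simp add: n_def mult.commute)
  qed
  with \<open>0 \<le> \<rho>\<close> \<open>\<rho> < 1\<close> show ?thesis by (rule that)
qed

lemma mexp_exponential_convergence:
  obtains K rate where "0 < rate"
    and "\<And>t a b. 0 \<le> t \<Longrightarrow> \<bar>mexp t R $ a $ b - stat_dist R $ a\<bar> \<le> K * exp (- rate * t)"
proof -
  obtain \<rho> where "0 \<le> \<rho>" "\<rho> < 1"
    and decay: "\<And>t a b. 0 \<le> t \<Longrightarrow> \<bar>mexp t R $ a $ b - stat_dist R $ a\<bar> \<le> 2 * \<rho> ^ nat \<lfloor>t\<rfloor>"
    by (rule mexp_decay) blast
  define \<sigma> where "\<sigma> = max \<rho> (1/2)"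
  have "0 < \<sigma>" and "\<sigma> < 1" using \<open>\<rho> < 1\<close> by (auto simp: \<sigma>_def)
  define rate where "rate = - ln \<sigma>"
  have "0 < rate" using \<open>0 < \<sigma>\<close> \<open>\<sigma> < 1\<close> by (simp add: rate_def)
  have bound: "\<rho> ^ nat \<lfloor>t\<rfloor> \<le> exp rate * exp (- rate * t)" if "0 \<le> t" for t
  proof -
    have "\<rho> ^ nat \<lfloor>t\<rfloor> \<le> \<sigma> ^ nat \<lfloor>t\<rfloor>"
      using \<open>0 \<le> \<rho>\<close> by (intro power_mono) (auto simp: \<sigma>_def)
    also have "\<dots> = exp (real (nat \<lfloor>t\<rfloor>) * ln \<sigma>)"
      using \<open>0 < \<sigma>\<close> by (simp add: exp_of_nat_mult)
    also have "\<dots> \<le> exp ((t - 1) * ln \<sigma>)"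
      using that \<open>0 < \<sigma>\<close> \<open>\<sigma> < 1\<close> by (intro exp_mono mult_right_mono_neg) (linarith, simp)
    also have "\<dots> = exp rate * exp (- rate * t)"
      by (simp add: rate_def algebra_simps flip: exp_add)
    finally show ?thesis .
  qed
  show ?thesis
  proof (rule that[where K = "2 * exp rate"])
    show "\<bar>mexp t R $ a $ b - stat_dist R $ a\<bar> \<le> 2 * exp rate * exp (- rate * t)" if "0 \<le> t" for t a b
      using decay[OF that, of a b] bound[OF that] by simp
  qed (use \<open>0 < rate\<close> in simp)
qed

lemma integrable_mexp_minus_stat_dist:
  "(\<lambda>t. mexp t R $ a $ b - stat_dist R $ a) integrable_on {0..}"
proof -
  obtain K rate where "0 < rate"
    and bound: "\<And>t a b. 0 \<le> t \<Longrightarrow> \<bar>mexp t R $ a $ b - stat_dist R $ a\<bar> \<le> K * exp (- rate * t)"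
    by (rule mexp_exponential_convergence) blast
  show ?thesis
  proof (rule measurable_bounded_by_integrable_imp_integrable)
    have "continuous_on {0..} (\<lambda>t. mexp t R $ a $ b)"
      by (intro continuous_at_imp_continuous_on ballI DERIV_isCont[OF has_real_derivative_mexp_entry])
    then show "(\<lambda>t. mexp t R $ a $ b - stat_dist R $ a) \<in> borel_measurable (lebesgue_on {0..})"
      by (intro continuous_imp_measurable_on_sets_lebesgue continuous_on_diff continuous_on_const) auto
    show "(\<lambda>t. K * exp (- rate * t)) integrable_on {0..}"
      using \<open>0 < rate\<close> by (intro integrable_on_mult_right integrable_on_exp_minus_to_infinity)
    show "norm (mexp t R $ a $ b - stat_dist R $ a) \<le> K * exp (- rate * t)" if "t \<in> {0..}" for t
      using bound that by simp
  qed simp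
qed

lemma mexp_tendsto_stat_dist: "((\<lambda>t. mexp t R $ a $ b) \<longlongrightarrow> stat_dist R $ a) at_top"
proof -
  obtain K rate where "0 < rate"
    and bound: "\<And>t a b. 0 \<le> t \<Longrightarrow> \<bar>mexp t R $ a $ b - stat_dist R $ a\<bar> \<le> K * exp (- rate * t)"
    by (rule mexp_exponential_convergence) blast
  show ?thesis
  proof (rule LIM_zero_cancel, rule Lim_null_comparison)
    show "\<forall>\<^sub>F t in at_top. norm (mexp t R $ a $ b - stat_dist R $ a) \<le> K * exp (- rate * t)"
      using eventually_ge_at_top[of "0::real"] by eventually_elim (unfold real_norm_def, rule bound)
    show "((\<lambda>t. K * exp (- rate * t)) \<longlongrightarrow> 0) at_top"
      using \<open>0 < rate\<close> by real_asymp
  qed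
qed

lemma fundamental_matrix_column_sum: "(\<Sum>a\<in>UNIV. fundamental_matrix R $ a $ b) = 0"
proof -
  have "(\<Sum>a\<in>UNIV. fundamental_matrix R $ a $ b)
      = integral {0..} (\<lambda>t. \<Sum>a\<in>UNIV. mexp t R $ a $ b - stat_dist R $ a)"
    unfolding fundamental_matrix_def
    by (simp add: integral_sum integrable_mexp_minus_stat_dist)
  also have "\<dots> = 0"
    using vec_sum_stat_dist by (simp add: sum_subtractf mexp_column_sum vec_sum_def)
  finally show ?thesis .
qed

lemma rate_mult_fundamental_matrix:
  "R ** fundamental_matrix R = (\<chi> a b. stat_dist R $ a) - mat 1"
proof -
  have "(\<Sum>c\<in>UNIV. R $ a $ c * fundamental_matrix R $ c $ b) = stat_dist R $ a - mat 1 $ a $ b" for a b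
  proof -
    obtain K rate where "0 < rate"
      and bound: "\<And>t a b. 0 \<le> t \<Longrightarrow> \<bar>mexp t R $ a $ b - stat_dist R $ a\<bar> \<le> K * exp (- rate * t)"
      by (rule mexp_exponential_convergence) blast
    define f where "f t = (\<Sum>c\<in>UNIV. R $ a $ c * (mexp t R $ c $ b - stat_dist R $ c))" for t
    have "(\<Sum>c\<in>UNIV. R $ a $ c * fundamental_matrix R $ c $ b) = integral {0..} f"
      unfolding fundamental_matrix_def f_def
      by (simp add: integral_sum integrable_mexp_minus_stat_dist integrable_on_mult_right)
    also have "\<dots> = stat_dist R $ a - mexp 0 R $ a $ b"
    proof (rule fundamental_theorem_of_calculus_atLeast)
      show "f integrable_on {0..}"
        unfolding f_def by (intro integrable_sum integrable_on_mult_right integrable_mexp_minus_stat_dist) simp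
      show "(\<lambda>t. (\<Sum>c\<in>UNIV. \<bar>R $ a $ c\<bar>) * K * exp (- rate * t)) integrable_on {0..}"
        using \<open>0 < rate\<close> by (intro integrable_on_mult_right integrable_on_exp_minus_to_infinity)
      show "\<bar>f t\<bar> \<le> (\<Sum>c\<in>UNIV. \<bar>R $ a $ c\<bar>) * K * exp (- rate * t)" if "0 \<le> t" for t
      proof -
        have "\<bar>f t\<bar> \<le> (\<Sum>c\<in>UNIV. \<bar>R $ a $ c\<bar> * \<bar>mexp t R $ c $ b - stat_dist R $ c\<bar>)"
          unfolding f_def by (rule order_trans[OF sum_abs]) (simp add: abs_mult)
        also have "\<dots> \<le> (\<Sum>c\<in>UNIV. \<bar>R $ a $ c\<bar> * (K * exp (- rate * t)))"
          by (intro sum_mono mult_left_mono bound that) simp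
        finally show ?thesis by (simp add: sum_distrib_right mult.assoc)
      qed
      have "f t = (R ** mexp t R) $ a $ b" for t
        using rate_mult_stat_dist
        by (simp add: f_def matrix_matrix_mult_def right_diff_distrib sum_subtractf vec_eq_iff
            matrix_vector_mult_def)
      then show "((\<lambda>t. mexp t R $ a $ b) has_real_derivative f t) (at t)" for t
        by (simp add: has_real_derivative_mexp_entry)
    qed (rule mexp_tendsto_stat_dist)
    finally show ?thesis by simp
  qed
  then show ?thesis by (simp add: vec_eq_iff matrix_matrix_mult_def)
qed

lemma fundamental_matrix_solves:
  assumes "vec_sum u = 0"
  shows "R *v (fundamental_matrix R *v u) = - u"
proof -
  have "(\<chi> a b. stat_dist R $ a) *v u = vec_sum u *\<^sub>R stat_dist R"
    by (simp add: vec_eq_iff matrix_vector_mult_def vec_sum_def sum_distrib_left mult.commute)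
  then show ?thesis
    using assms
    by (simp add: matrix_vector_mul_assoc rate_mult_fundamental_matrix matrix_vector_mult_diff_rdistrib)
qed

lemma vec_sum_fundamental_matrix_mult: "vec_sum (fundamental_matrix R *v u) = 0"
  by (simp add: vec_sum_matrix_vector_mult fundamental_matrix_column_sum)

end

lemma fundamental_matrix_rank_one_update:
  assumes "rate_generator R" and "rate_generator R'"
    and "vec_sum u = 0" and "u \<noteq> 0"
    and update: "\<And>v. R' *v v = R *v v + (s * v $ j) *\<^sub>R u"
  shows "\<exists>\<kappa>. \<kappa> \<noteq> 0 \<and> fundamental_matrix R *v u = \<kappa> *\<^sub>R (fundamental_matrix R' *v u)"
proof -
  interpret R: rate_generator R by fact
  interpret R': rate_generator R' by fact
  define d where "d = fundamental_matrix R *v u"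
  define d' where "d' = fundamental_matrix R' *v u"
  define \<kappa> where "\<kappa> = 1 - s * d $ j"
  have "R *v d = - u" and "R' *v d' = - u"
    using R.fundamental_matrix_solves R'.fundamental_matrix_solves \<open>vec_sum u = 0\<close>
    by (simp_all add: d_def d'_def)
  then have "R' *v d = \<kappa> *\<^sub>R (R' *v d')"
    by (simp add: update \<kappa>_def algebra_simps)
  then have "R' *v (d - \<kappa> *\<^sub>R d') = 0"
    by (simp add: matrix_vector_mult_diff_distrib matrix_vector_mult_scaleR)
  moreover have "vec_sum (d - \<kappa> *\<^sub>R d') = 0"
    using R.vec_sum_fundamental_matrix_mult R'.vec_sum_fundamental_matrix_mult
    by (simp add: d_def d'_def vec_sum_def sum_subtractf flip: sum_distrib_left)
  ultimately have "d - \<kappa> *\<^sub>R d' = 0"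
    by (rule R'.rate_kernel_trivial)
  then have "d = \<kappa> *\<^sub>R d'" by simp
  moreover have "\<kappa> \<noteq> 0"
  proof
    assume "\<kappa> = 0"
    with \<open>d = \<kappa> *\<^sub>R d'\<close> have "R *v d = 0" by simp
    with \<open>R *v d = - u\<close> \<open>u \<noteq> 0\<close> show False by simp
  qed
  ultimately show ?thesis by (auto simp: d_def d'_def)
qed

section \<open>Varying a single rate\<close>

lemma rate_generator_rate_matrix:
  assumes "\<And>a b. a \<noteq> b \<Longrightarrow> 0 \<le> r a b" and "0 < x"
    and "irreducible_rates (rate_matrix r i j x)"
  shows "rate_generator (rate_matrix r i j x)"
proof
  show "a \<noteq> b \<Longrightarrow> 0 \<le> rate_matrix r i j x $ a $ b" for a b
    using assms by (simp add: rate_matrix_def)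
  show "(\<Sum>a\<in>UNIV. rate_matrix r i j x $ a $ b) = 0" for b
  proof -
    have "(\<Sum>a\<in>UNIV - {b}. rate_matrix r i j x $ a $ b) = (\<Sum>c\<in>UNIV - {b}. if c = i \<and> b = j then x else r c b)"
      by (rule sum.cong) (auto simp: rate_matrix_def)
    then show ?thesis
      by (simp add: sum.remove[of UNIV b] rate_matrix_def)
  qed
qed (use assms in simp)

lemma rate_matrix_update:
  fixes r :: "'n::finite \<Rightarrow> 'n \<Rightarrow> real"
  assumes "i \<noteq> j"
  shows "rate_matrix r i j y *v v = rate_matrix r i j x *v v + ((y - x) * v $ j) *\<^sub>R (axis i 1 - axis j 1)"
proof -
  let ?u = "axis i 1 - axis j 1 :: real^'n"
  have entry: "rate_matrix r i j y $ a $ c = rate_matrix r i j x $ a $ c + (if c = j then (y - x) * ?u $ a else 0)"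
    for a c
  proof (cases "a = c")
    case True
    have "(\<Sum>c'\<in>UNIV - {c}. if c' = i \<and> c = j then y else r c' c)
        = (\<Sum>c'\<in>UNIV - {c}. (if c' = i \<and> c = j then x else r c' c) + (if c' = i \<and> c = j then y - x else 0))"
      by (rule sum.cong) auto
    also have "\<dots> = (\<Sum>c'\<in>UNIV - {c}. if c' = i \<and> c = j then x else r c' c) + (if c = j then y - x else 0)"
      using assms by (cases "c = j") (simp_all add: sum.distrib)
    finally show ?thesis using True assms by (simp add: rate_matrix_def axis_def)
  qed (use assms in \<open>auto simp: rate_matrix_def axis_def\<close>)
  have "(rate_matrix r i j y *v v) $ a = (rate_matrix r i j x *v v) $ a + (y - x) * ?u $ a * v $ j" for a
    by (simp add: matrix_vector_mult_def entry distrib_right sum.distrib if_distrib[of "\<lambda>z. z * _"]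
        cong: if_cong)
  then show ?thesis by (simp add: vec_eq_iff mult_ac)
qed

lemma chi_ratio_eq_fundamental_matrix_mult:
  "chi_ratio r i j a1 b1 a2 b2 x =
    (\<Sum>l\<in>UNIV. coeff_c r i j a1 b1 l * (fundamental_matrix (rate_matrix r i j x) *v (axis i 1 - axis j 1)) $ l) /
    (\<Sum>l\<in>UNIV. coeff_c r i j a2 b2 l * (fundamental_matrix (rate_matrix r i j x) *v (axis i 1 - axis j 1)) $ l)"
  by (simp add: chi_ratio_def Let_def matrix_vector_mult_diff_distrib)

lemma chi_ratio_rate_independent:
  fixes r :: "'n::finite \<Rightarrow> 'n \<Rightarrow> real"
  assumes "i \<noteq> j"
    and "\<And>a b. a \<noteq> b \<Longrightarrow> 0 \<le> r a b"
    and "\<And>x. 0 < x \<Longrightarrow> irreducible_rates (rate_matrix r i j x)"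
    and "0 < x" and "0 < y"
  shows "chi_ratio r i j a1 b1 a2 b2 x = chi_ratio r i j a1 b1 a2 b2 y"
proof -
  let ?u = "axis i 1 - axis j 1 :: real^'n"
  let ?d = "\<lambda>x. fundamental_matrix (rate_matrix r i j x) *v ?u"
  have generator: "rate_generator (rate_matrix r i j x)" if "0 < x" for x
    using rate_generator_rate_matrix[OF assms(2) that assms(3)[OF that]] .
  have "vec_sum ?u = 0"
    by (simp add: vec_sum_def sum_subtractf axis_def)
  have "?u $ i = 1"
    using \<open>i \<noteq> j\<close> by (simp add: axis_def)
  then have "?u \<noteq> 0" by (metis zero_index zero_neq_one)
  obtain \<kappa> where "\<kappa> \<noteq> 0" and "?d x = \<kappa> *\<^sub>R ?d y"
    using fundamental_matrix_rank_one_update[OF generator[OF \<open>0 < x\<close>] generator[OF \<open>0 < y\<close>]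
        \<open>vec_sum ?u = 0\<close> \<open>?u \<noteq> 0\<close> rate_matrix_update[OF \<open>i \<noteq> j\<close>]]
    by blast
  then have "(\<Sum>l\<in>UNIV. c l * ?d x $ l) = \<kappa> * (\<Sum>l\<in>UNIV. c l * ?d y $ l)" for c :: "'n \<Rightarrow> real"
    by (simp add: sum_distrib_left mult_ac)
  with \<open>\<kappa> \<noteq> 0\<close> show ?thesis
    by (simp add: chi_ratio_eq_fundamental_matrix_mult)
qed

theorem theorem2:
  fixes r :: "'n::finite \<Rightarrow> 'n \<Rightarrow> real"
    and i j :: 'n
    and a1 a2 :: "'n \<Rightarrow> real" and b1 b2 :: "'n \<Rightarrow> 'n \<Rightarrow> real"
    and x0 :: real
  assumes "i \<noteq> j"
    and "\<And>a b. a \<noteq> b \<Longrightarrow> r a b \<ge> 0"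
    and "\<And>x. x > 0 \<Longrightarrow> irreducible_rates (rate_matrix r i j x)"
    and "x0 > 0"
    and "(\<Sum>l\<in>UNIV. coeff_c r i j a2 b2 l *
            (fundamental_matrix (rate_matrix r i j x0) $ l $ i
             - fundamental_matrix (rate_matrix r i j x0) $ l $ j)) \<noteq> 0"
  shows "(chi_ratio r i j a1 b1 a2 b2 has_real_derivative 0) (at x0)"
proof -
  have "((\<lambda>_. chi_ratio r i j a1 b1 a2 b2 x0) has_real_derivative 0) (at x0)"
    by simp
  \<comment> \<open>The ratio is constant on \<open>{0<..}\<close>.\<close>
  then show ?thesis
    by (rule has_field_derivative_transform_within_open[where S = "{0<..}"])
      (use assms(4) chi_ratio_rate_independent[OF assms(1-3) assms(4)] in auto)
qed

end
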